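(* Let $1<p<\infty$, $1/p-1<\gamma<1/p$, and $\{\lambda_n\}_{n=1}^\infty\in\mathrm{GBV}$. Then there is a constant $C$ depending only on $M(\lambda)$, $p$ and $\gamma$ such that $$\sum_{n=1}^\infty n^{p+p\gamma-2}\Big(\sum_{k=n}^\infty|\lambda_k-\lambda_{k+1}|\Big)^p\le C\sum_{n=1}^\infty n^{p+p\gamma-2}\lambda_n^p .$$
   Context: $\Delta c_n:=c_n-c_{n+1}$. A sequence $\mathbf c=\{c_n\}_{n=1}^\infty$ belongs to the class $\mathrm{GBV}$ if $c_n\ge 0$ for all $n$, $c_n\to 0$ as $n\to\infty$, and there is a positive constant $M(\mathbf c)$ depending only on $\mathbf c$ such that $\sum_{n=m}^{2m}|\Delta c_n|\le M(\mathbf c)\,c_m$ for all $m=1,2,\dots$. *)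

theory Defs
  imports "HOL-Analysis.Analysis"
begin

text \<open>Sequences are indexed from 1; the value at index 0 is ignored.
  The difference operator: \<Delta> c n = c n - c (n+1).\<close>

definition Delta :: "(nat \<Rightarrow> real) \<Rightarrow> nat \<Rightarrow> real" where
  "Delta c n = c n - c (Suc n)"

definition GBV_with :: "real \<Rightarrow> (nat \<Rightarrow> real) \<Rightarrow> bool" where
  "GBV_with M c \<longleftrightarrow> M > 0 \<and> (\<forall>n\<ge>1. c n \<ge> 0) \<and> c \<longlonglongrightarrow> 0 \<and>
     (\<forall>m\<ge>1. (\<Sum>n=m..2*m. \<bar>Delta c n\<bar>) \<le> M * c m)"

definition GBV :: "(nat \<Rightarrow> real) \<Rightarrow> bool" where
  "GBV c \<longleftrightarrow> (\<exists>M. GBV_with M c)"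

definition ennpow :: "ennreal \<Rightarrow> real \<Rightarrow> ennreal" where
  "ennpow x p = (if x = top then top else ennreal (enn2real x powr p))"

end

theory Submission
  imports Defs
begin

(* Write al = p + p*gamma - 2; the hypothesis gamma > 1/p - 1 says exactly al > -1.
   Split both sums into dyadic blocks [2^i, 2^(i+1)). On block i the weight n^al is comparable
   to 2^(i*al), and the tail variation is at most its value at 2^i, which the GBV condition bounds
   by M * sum_l c(2^(i+l)). Raising this to the p-th power costs only a geometric weight in l.
   GBV also gives c(2^j) <= (1+M) c(m) for 2^(j-1) <= m <= 2^j, so 2^(j(al+1)) c(2^j)^p is
   controlled by the (j-1)-st dyadic block of the right-hand side. Hence the left-hand side is
   bounded by a convolution of the right-hand blocks with a geometric kernel, and summing gives a
   constant times the right-hand side. All sums live in ennreal, so no summability is assumed. *)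

lemma ennpow_ennreal: "0 \<le> x \<Longrightarrow> ennpow (ennreal x) p = ennreal (x powr p)"
  by (simp add: ennpow_def)

lemma ennpow_mono:
  assumes "x \<le> y" "0 \<le> p" shows "ennpow x p \<le> ennpow y p"
proof (cases "y = top")
  case False
  then have "x \<noteq> top" "enn2real x \<le> enn2real y"
    using assms(1) by (auto simp: top_unique enn2real_mono top.not_eq_extremum)
  then show ?thesis using False assms
    by (simp add: ennpow_def ennreal_leI powr_mono2)
qed (simp add: ennpow_def)

lemma suminf_ennreal_swap: "(\<Sum>i. \<Sum>j. f i j :: ennreal) = (\<Sum>j. \<Sum>i. f i j)"
proof -
  have "(\<Sum>i. \<Sum>j. f i j) = (\<Sum>i. \<integral>\<^sup>+j. f i j \<partial>count_space UNIV)"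
    by (simp add: nn_integral_count_space_nat)
  also have "\<dots> = (\<integral>\<^sup>+j. (\<Sum>i. f i j) \<partial>count_space UNIV)"
    by (rule nn_integral_suminf[symmetric]) auto
  also have "\<dots> = (\<Sum>j. \<Sum>i. f i j)" by (simp add: nn_integral_count_space_nat)
  finally show ?thesis .
qed

lemma suminf_ennreal_term_le: "(f l :: ennreal) \<le> suminf f"
  using sum_le_suminf[OF summableI, of "{l}" f] by simp

lemma suminf_ennreal_shift_le: "(\<Sum>j. f (j + i) :: ennreal) \<le> suminf f"
  using suminf_offset[OF summableI, of f i] by simp

lemma suminf_ennreal_geometric:
  assumes "0 \<le> K" "0 \<le> r" "r < 1"
  shows "(\<Sum>l. ennreal (K * r ^ l)) = ennreal (K / (1 - r))"
proof -
  have "summable (\<lambda>l. K * r ^ l)" using assms by (intro summable_mult summable_geometric) auto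
  then show ?thesis using assms by (simp add: suminf_ennreal2 suminf_mult suminf_geometric)
qed

lemma suminf_ennreal_pred_le: "(\<Sum>j. T (j - 1)) \<le> 2 * (\<Sum>j. T j :: ennreal)"
proof -
  have "(\<Sum>j. T (j - 1)) = (\<Sum>j. T j) + T 0"
    using suminf_offset[OF summableI, of "\<lambda>j. T (j - 1)" 1] by simp
  also have "\<dots> \<le> (\<Sum>j. T j) + (\<Sum>j. T j)" by (intro add_left_mono suminf_ennreal_term_le)
  finally show ?thesis by (simp add: mult_2)
qed

lemma suminf_geometric_convolution_le:
  fixes T :: "nat \<Rightarrow> real"
  assumes K: "0 \<le> K" and r: "0 \<le> r" "r < 1" and T: "\<And>j. 0 \<le> T j"
  shows "(\<Sum>i. \<Sum>l. ennreal (K * r ^ l * T (i + l))) \<le> ennreal (K / (1 - r)) * (\<Sum>j. ennreal (T j))"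
proof -
  have "(\<Sum>i. \<Sum>l. ennreal (K * r ^ l * T (i + l))) = (\<Sum>l. ennreal (K * r ^ l) * (\<Sum>i. ennreal (T (i + l))))"
    using K r T by (subst suminf_ennreal_swap) (simp add: ennreal_mult)
  also have "\<dots> \<le> (\<Sum>l. ennreal (K * r ^ l) * (\<Sum>j. ennreal (T j)))"
    by (intro suminf_le summableI mult_left_mono suminf_ennreal_shift_le) auto
  also have "\<dots> = ennreal (K / (1 - r)) * (\<Sum>j. ennreal (T j))"
    by (simp only: ennreal_suminf_multc suminf_ennreal_geometric[OF K r])
  finally show ?thesis .
qed

lemma ennpow_suminf_le_geometric_weights:
  fixes x :: "nat \<Rightarrow> real"
  assumes x: "\<And>l. 0 \<le> x l" and p: "0 < p" and q: "0 < q" "q < 1"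
  shows "ennpow (\<Sum>l. ennreal (x l)) p
     \<le> ennreal ((1 - q) powr (-p)) * (\<Sum>l. ennreal ((x l / q ^ l) powr p))"
proof (cases "(\<Sum>l. ennreal ((x l / q ^ l) powr p)) = top")
  case True
  then show ?thesis using q by (simp add: ennreal_mult_top)
next
  case False
  then obtain X where X: "0 \<le> X" "(\<Sum>l. ennreal ((x l / q ^ l) powr p)) = ennreal X"
    using less_top_ennreal top.not_eq_extremum by blast
  have x_le: "x l \<le> X powr (1/p) * q ^ l" for l
  proof -
    have "ennreal ((x l / q ^ l) powr p) \<le> ennreal X"
      unfolding X(2)[symmetric] by (rule suminf_ennreal_term_le)
    then have "((x l / q ^ l) powr p) powr (1/p) \<le> X powr (1/p)"
      using X p by (intro powr_mono2) (auto simp: ennreal_le_iff)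
    then show ?thesis using x[of l] p q by (simp add: powr_powr divide_simps mult.commute)
  qed
  have "(\<Sum>l. ennreal (x l)) \<le> (\<Sum>l. ennreal (X powr (1/p) * q ^ l))"
    by (intro suminf_le summableI ennreal_leI x_le)
  also have "\<dots> = ennreal (X powr (1/p) / (1 - q))"
    using q by (intro suminf_ennreal_geometric) auto
  finally have "ennpow (\<Sum>l. ennreal (x l)) p \<le> ennpow (ennreal (X powr (1/p) / (1 - q))) p"
    using p by (intro ennpow_mono) auto
  also have "\<dots> = ennreal ((1 - q) powr (-p) * X)"
    using X q p by (simp add: ennpow_ennreal powr_divide powr_powr powr_minus divide_simps)
  finally show ?thesis using X q by (simp add: ennreal_mult)
qed

lemma sum_blocks_lessThan:
  fixes b :: "nat \<Rightarrow> nat"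
  assumes "mono b"
  shows "(\<Sum>l<N. sum f {b l..<b (Suc l)}) = sum f {b 0..<b N}"
proof (induction N)
  case (Suc N)
  have "b 0 \<le> b N" "b N \<le> b (Suc N)" using assms by (simp_all add: monoD)
  then show ?case using Suc by (simp add: sum.atLeastLessThan_concat)
qed simp

lemma infsum_ennreal_atLeast_blocks:
  fixes f :: "nat \<Rightarrow> ennreal"
  assumes b: "strict_mono b"
  shows "infsum f {b 0..} = (\<Sum>l. sum f {b l..<b (Suc l)})"
proof -
  have "infsum f {b 0..} = (SUP F\<in>{F. finite F \<and> F \<subseteq> {b 0..}}. sum f F)"
    by (rule nonneg_infsum_complete) simp
  also have "\<dots> = (SUP N. sum f {b 0..<b N})"
  proof (rule antisym)
    show "(SUP F\<in>{F. finite F \<and> F \<subseteq> {b 0..}}. sum f F) \<le> (SUP N. sum f {b 0..<b N})"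
    proof (rule SUP_least)
      fix F assume F: "F \<in> {F. finite F \<and> F \<subseteq> {b 0..}}"
      define N where "N = Suc (Max (insert 0 F))"
      have "F \<subseteq> {b 0..<b N}"
      proof
        fix x assume "x \<in> F"
        then have "x < N" using F by (simp add: N_def le_imp_less_Suc)
        also have "N \<le> b N" using b by (rule strict_mono_imp_increasing)
        finally show "x \<in> {b 0..<b N}" using F \<open>x \<in> F\<close> by auto
      qed
      then show "sum f F \<le> (SUP N. sum f {b 0..<b N})"
        by (intro SUP_upper2[OF UNIV_I] sum_mono2) auto
    qed
    show "(SUP N. sum f {b 0..<b N}) \<le> (SUP F\<in>{F. finite F \<and> F \<subseteq> {b 0..}}. sum f F)"
      by (rule SUP_least, rule SUP_upper) auto
  qed
  also have "\<dots> = (\<Sum>l. sum f {b l..<b (Suc l)})"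
    using b by (simp add: suminf_eq_SUP sum_blocks_lessThan strict_mono_mono)
  finally show ?thesis .
qed

lemma infsum_ennreal_atLeast_one_dyadic:
  fixes f :: "nat \<Rightarrow> ennreal"
  shows "(\<Sum>\<^sub>\<infinity>n\<in>{1..}. f n) = (\<Sum>i. \<Sum>n\<in>{2^i..<2^(i+1)}. f n)"
  using infsum_ennreal_atLeast_blocks[of "(^) 2" f] by (simp add: strict_mono_def)

lemma antimono_infsum_ennreal_atLeast:
  fixes f :: "nat \<Rightarrow> ennreal"
  shows "antimono (\<lambda>n. \<Sum>\<^sub>\<infinity>k\<in>{n..}. f k)"
  by (intro antimonoI infsum_mono_neutral nonneg_summable_on_complete) auto

definition dyadic_block :: "(nat \<Rightarrow> real) \<Rightarrow> nat \<Rightarrow> real" where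
  "dyadic_block f t = (\<Sum>n\<in>{2^t..<2^(t+1)}. f n)"

lemma infsum_ennreal_atLeast_one_eq_dyadic_blocks:
  fixes g :: "nat \<Rightarrow> real"
  assumes "\<And>n. 0 \<le> g n"
  shows "(\<Sum>\<^sub>\<infinity>n\<in>{1..}. ennreal (g n)) = (\<Sum>t. ennreal (dyadic_block g t))"
  by (subst infsum_ennreal_atLeast_one_dyadic) (simp add: dyadic_block_def sum_ennreal assms)

lemma infsum_le_of_dyadic_blocks_le_convolution:
  fixes a :: "nat \<Rightarrow> ennreal" and g :: "nat \<Rightarrow> real"
  assumes g: "\<And>n. 0 \<le> g n" and K: "0 \<le> K" and r: "0 \<le> r" "r < 1"
    and block: "\<And>i. (\<Sum>n\<in>{2^i..<2^(i+1)}. a n)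
      \<le> (\<Sum>l. ennreal (K * r ^ l * dyadic_block g (i + l - 1)))"
  shows "(\<Sum>\<^sub>\<infinity>n\<in>{1..}. a n) \<le> ennreal (2 * K / (1 - r)) * (\<Sum>\<^sub>\<infinity>n\<in>{1..}. ennreal (g n))"
proof -
  have "(\<Sum>\<^sub>\<infinity>n\<in>{1..}. a n) \<le> (\<Sum>i. \<Sum>l. ennreal (K * r ^ l * dyadic_block g (i + l - 1)))"
    unfolding infsum_ennreal_atLeast_one_dyadic by (intro suminf_le summableI block)
  also have "\<dots> \<le> ennreal (K / (1 - r)) * (\<Sum>j. ennreal (dyadic_block g (j - 1)))"
    using K r g by (intro suminf_geometric_convolution_le) (auto simp: dyadic_block_def sum_nonneg)
  also have "\<dots> \<le> ennreal (K / (1 - r)) * (2 * (\<Sum>j. ennreal (dyadic_block g j)))"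
    by (intro mult_left_mono suminf_ennreal_pred_le) simp
  also have "\<dots> = ennreal (2 * K / (1 - r)) * (\<Sum>\<^sub>\<infinity>n\<in>{1..}. ennreal (g n))"
  proof -
    have "ennreal (2 * K / (1 - r)) = 2 * ennreal (K / (1 - r))"
      using K r by (subst times_divide_eq_right[symmetric], subst ennreal_mult) auto
    then show ?thesis by (simp only: infsum_ennreal_atLeast_one_eq_dyadic_blocks[OF g] mult_ac)
  qed
  finally show ?thesis .
qed

lemma powr_bounds_on_dyadic_block:
  fixes n i :: nat
  assumes "2 ^ i \<le> n" "n \<le> 2 ^ (i + 1)"
  shows "2 powr (-\<bar>a\<bar>) * 2 powr (real i * a) \<le> real n powr a"
    and "real n powr a \<le> 2 powr \<bar>a\<bar> * 2 powr (real i * a)"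
proof -
  define t where "t = real n / 2 ^ i"
  have "real (2 ^ i) \<le> real n" "real n \<le> real (2 ^ (i + 1))"
    using assms by (simp_all only: of_nat_le_iff)
  then have t: "1 \<le> t" "t \<le> 2" by (simp_all add: t_def field_simps)
  have n: "real n powr a = 2 powr (real i * a) * t powr a"
    using t by (simp add: t_def powr_divide powr_realpow[symmetric] powr_powr)
  have "2 powr (-\<bar>a\<bar>) \<le> t powr a \<and> t powr a \<le> 2 powr \<bar>a\<bar>"
  proof (cases "0 \<le> a")
    case True
    have "2 powr (-\<bar>a\<bar>) \<le> 1" "1 \<le> t powr a"
      using True t powr_mono[of "-\<bar>a\<bar>" 0 "2::real"] by (auto simp: ge_one_powr_ge_zero)
    then show ?thesis using True t by (auto simp: powr_mono2)
  next
    case False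
    have "t powr a \<le> 1" "1 \<le> 2 powr \<bar>a\<bar>"
      using False t powr_mono2'[of a 1 t] powr_mono[of 0 "\<bar>a\<bar>" "2::real"] by auto
    then show ?thesis using False t by (auto simp: powr_mono2')
  qed
  then show "2 powr (-\<bar>a\<bar>) * 2 powr (real i * a) \<le> real n powr a"
    and "real n powr a \<le> 2 powr \<bar>a\<bar> * 2 powr (real i * a)"
    by (simp_all add: n mult.commute)
qed

lemma weighted_dyadic_block_le_antimono:
  fixes B :: "nat \<Rightarrow> ennreal"
  assumes B: "antimono B" and p: "0 \<le> p"
  shows "(\<Sum>n\<in>{2^i..<2^(i+1)}. ennreal (real n powr al) * ennpow (B n) p)
    \<le> ennreal (2 powr \<bar>al\<bar> * 2 powr (real i * (al + 1))) * ennpow (B (2 ^ i)) p"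
proof -
  have "(\<Sum>n\<in>{2^i..<2^(i+1)}. ennreal (real n powr al) * ennpow (B n) p)
      \<le> (\<Sum>n\<in>{(2::nat)^i..<2^(i+1)}. ennreal (2 powr \<bar>al\<bar> * 2 powr (real i * al)) * ennpow (B (2^i)) p)"
    using p by (intro sum_mono mult_mono ennreal_leI powr_bounds_on_dyadic_block ennpow_mono
        antimonoD[OF B]) auto
  also have "\<dots> = ennreal ((2::real) ^ i * (2 powr \<bar>al\<bar> * 2 powr (real i * al))) * ennpow (B (2^i)) p"
    by (simp add: ennreal_of_nat_eq_real_of_nat mult.assoc[symmetric] ennreal_mult[symmetric])
  also have "(2::real) ^ i * (2 powr \<bar>al\<bar> * 2 powr (real i * al)) = 2 powr \<bar>al\<bar> * 2 powr (real i * (al + 1))"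
    by (simp add: powr_realpow[symmetric] powr_add[symmetric] algebra_simps)
  finally show ?thesis .
qed

lemma GBV_with_pos: "GBV_with M c \<Longrightarrow> 0 < M"
  unfolding GBV_with_def by blast

lemma GBV_with_nonneg: "GBV_with M c \<Longrightarrow> 1 \<le> n \<Longrightarrow> 0 \<le> c n"
  unfolding GBV_with_def by blast

lemma GBV_with_variation_le:
  assumes c: "GBV_with M c" and "1 \<le> m" "m \<le> k" "k \<le> 2 * m"
  shows "(\<Sum>i=m..<k. \<bar>Delta c i\<bar>) \<le> M * c m"
proof -
  have "(\<Sum>i=m..<k. \<bar>Delta c i\<bar>) \<le> (\<Sum>i=m..2*m. \<bar>Delta c i\<bar>)"
    using assms by (intro sum_mono2) auto
  also have "\<dots> \<le> M * c m" using c \<open>1 \<le> m\<close> unfolding GBV_with_def by blast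
  finally show ?thesis .
qed

lemma GBV_with_le_mult:
  assumes c: "GBV_with M c" and m: "1 \<le> m" "m \<le> k" "k \<le> 2 * m"
  shows "c k \<le> (1 + M) * c m"
proof -
  have "c k = c m - (\<Sum>i=m..<k. Delta c i)"
    using sum_Suc_diff'[OF \<open>m \<le> k\<close>, of c] by (simp add: Delta_def sum_subtractf)
  also have "\<dots> \<le> c m + (\<Sum>i=m..<k. \<bar>Delta c i\<bar>)"
    using sum_abs[of "Delta c" "{m..<k}"] by linarith
  also have "\<dots> \<le> (1 + M) * c m" using GBV_with_variation_le[OF c m] by (simp add: algebra_simps)
  finally show ?thesis .
qed

lemma GBV_with_tail_variation_le:
  assumes c: "GBV_with M c"
  shows "(\<Sum>\<^sub>\<infinity>k\<in>{2^i..}. ennreal \<bar>Delta c k\<bar>) \<le> (\<Sum>l. ennreal (M * c (2 ^ (i + l))))"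
proof -
  have "strict_mono (\<lambda>l. (2::nat) ^ (i + l))" by (intro strict_monoI) simp
  then have "(\<Sum>\<^sub>\<infinity>k\<in>{2^i..}. ennreal \<bar>Delta c k\<bar>)
      = (\<Sum>l. \<Sum>k\<in>{2 ^ (i + l)..<2 ^ (i + Suc l)}. ennreal \<bar>Delta c k\<bar>)"
    using infsum_ennreal_atLeast_blocks by fastforce
  also have "\<dots> \<le> (\<Sum>l. ennreal (M * c (2 ^ (i + l))))"
  proof (intro suminf_le summableI)
    fix l
    have "(\<Sum>k\<in>{2 ^ (i + l)..<2 ^ (i + Suc l)}. \<bar>Delta c k\<bar>) \<le> M * c (2 ^ (i + l))"
      by (rule GBV_with_variation_le[OF c]) auto
    then show "(\<Sum>k\<in>{2 ^ (i + l)..<2 ^ (i + Suc l)}. ennreal \<bar>Delta c k\<bar>) \<le> ennreal (M * c (2 ^ (i + l)))"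
      by (simp add: ennreal_leI)
  qed
  finally show ?thesis .
qed

(* The block index j - 1 is truncated: for j = 0 it is the block {1}, and the bound still holds. *)
lemma GBV_with_power_le_dyadic_block:
  assumes c: "GBV_with M c" and p: "0 < p" and a: "0 < al + 1"
  shows "2 powr (real j * (al + 1)) * c (2 ^ j) powr p
    \<le> (1 + M) powr p * 2 powr \<bar>al\<bar> * 2 powr (al + 1) * dyadic_block (\<lambda>m. real m powr al * c m powr p) (j - 1)"
proof -
  define t where "t = j - 1"
  have M: "0 < M" using GBV_with_pos[OF c] .
  have c_j: "0 \<le> c (2 ^ j)" using GBV_with_nonneg[OF c] by simp
  have each: "2 powr (-\<bar>al\<bar>) * 2 powr (real t * al) * c (2 ^ j) powr p \<le> (1 + M) powr p * (real m powr al * c m powr p)"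
    if m: "m \<in> {2^t..<2^(t+1)}" for m
  proof -
    have "1 \<le> m" "m \<le> 2 ^ j" "2 ^ j \<le> 2 * m"
      using m by (cases j; auto simp: t_def)+
    then have "c (2 ^ j) powr p \<le> ((1 + M) * c m) powr p"
      using c_j p by (intro powr_mono2 GBV_with_le_mult[OF c]) auto
    also have "\<dots> = (1 + M) powr p * c m powr p"
      using M GBV_with_nonneg[OF c \<open>1 \<le> m\<close>] by (simp add: powr_mult)
    finally have "2 powr (-\<bar>al\<bar>) * 2 powr (real t * al) * c (2 ^ j) powr p
        \<le> real m powr al * ((1 + M) powr p * c m powr p)"
      using powr_bounds_on_dyadic_block(1)[of t m al] m by (intro mult_mono) auto
    then show ?thesis by (simp only: ac_simps)
  qed
  have block: "2 ^ t * (2 powr (-\<bar>al\<bar>) * 2 powr (real t * al) * c (2 ^ j) powr p)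
      \<le> (1 + M) powr p * dyadic_block (\<lambda>m. real m powr al * c m powr p) t"
  proof -
    have "of_nat (card {(2::nat)^t..<2^(t+1)}) * (2 powr (-\<bar>al\<bar>) * 2 powr (real t * al) * c (2 ^ j) powr p)
        \<le> (\<Sum>m\<in>{2^t..<2^(t+1)}. (1 + M) powr p * (real m powr al * c m powr p))"
      by (rule sum_bounded_below) (rule each)
    then show ?thesis by (simp add: dyadic_block_def sum_distrib_left)
  qed
  have weight: "2 powr (real j * (al + 1)) \<le> 2 powr (al + 1) * (2 ^ t * 2 powr (real t * al))"
  proof -
    have "real j * (al + 1) \<le> (al + 1) + (real t + real t * al)"
      using a by (cases j) (auto simp: t_def algebra_simps)
    then show ?thesis by (simp add: powr_realpow[symmetric] powr_add[symmetric])
  qed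
  have "2 powr (real j * (al + 1)) * c (2 ^ j) powr p
      \<le> 2 powr (al + 1) * (2 ^ t * 2 powr (real t * al)) * c (2 ^ j) powr p"
    using weight by (rule mult_right_mono) simp
  also have "\<dots> = 2 powr (al + 1) * 2 powr \<bar>al\<bar>
      * (2 ^ t * (2 powr (-\<bar>al\<bar>) * 2 powr (real t * al) * c (2 ^ j) powr p))"
    by (simp add: powr_minus field_simps)
  also have "\<dots> \<le> 2 powr (al + 1) * 2 powr \<bar>al\<bar>
      * ((1 + M) powr p * dyadic_block (\<lambda>m. real m powr al * c m powr p) t)"
    using block by (rule mult_left_mono) simp
  finally show ?thesis by (simp add: t_def ac_simps)
qed

lemma GBV_with_weighted_term_le:
  assumes c: "GBV_with M c" and p: "0 < p" and a: "0 < al + 1"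
  shows "2 powr (real i * (al + 1)) * (M * c (2 ^ (i + l)) / (2 powr (-(al + 1) / (2 * p))) ^ l) powr p
    \<le> M powr p * ((1 + M) powr p * 2 powr \<bar>al\<bar> * 2 powr (al + 1)) * (2 powr (-(al + 1) / 2)) ^ l
      * dyadic_block (\<lambda>m. real m powr al * c m powr p) (i + l - 1)"
proof -
  define s where "s = 2 powr (- (real l * (al + 1)) / 2)"
  have M: "0 < M" using GBV_with_pos[OF c] .
  have x: "0 \<le> c (2 ^ (i + l))" using GBV_with_nonneg[OF c] by simp
  have "((2 powr (-(al + 1) / (2 * p))) ^ l) powr p = 2 powr (-(al + 1) / (2 * p) * (real l * p))"
    by (simp add: powr_realpow[symmetric] powr_powr)
  also have "-(al + 1) / (2 * p) * (real l * p) = - (real l * (al + 1)) / 2"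
    using p by (simp add: field_simps)
  finally have q: "((2 powr (-(al + 1) / (2 * p))) ^ l) powr p = s" by (simp add: s_def)
  have r: "(2 powr (-(al + 1) / 2)) ^ l = s"
    by (simp add: s_def powr_realpow[symmetric] powr_powr field_simps)
  have "(M * c (2 ^ (i + l)) / (2 powr (-(al + 1) / (2 * p))) ^ l) powr p
      = (M * c (2 ^ (i + l))) powr p / ((2 powr (-(al + 1) / (2 * p))) ^ l) powr p"
    using M x by (intro powr_divide)
  also have "\<dots> = M powr p * c (2 ^ (i + l)) powr p / s"
    unfolding q using M x by (simp add: powr_mult)
  finally have "2 powr (real i * (al + 1)) * (M * c (2 ^ (i + l)) / (2 powr (-(al + 1) / (2 * p))) ^ l) powr p
      = M powr p * c (2 ^ (i + l)) powr p * (2 powr (real i * (al + 1)) / s)"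
    by simp
  also have "2 powr (real i * (al + 1)) / s = s * 2 powr (real (i + l) * (al + 1))"
    by (simp add: s_def powr_diff[symmetric] powr_add[symmetric] field_simps)
  also have "M powr p * c (2 ^ (i + l)) powr p * (s * 2 powr (real (i + l) * (al + 1)))
      = M powr p * s * (2 powr (real (i + l) * (al + 1)) * c (2 ^ (i + l)) powr p)"
    by (simp only: mult_ac)
  also have "\<dots> \<le> M powr p * s * ((1 + M) powr p * 2 powr \<bar>al\<bar> * 2 powr (al + 1)
      * dyadic_block (\<lambda>m. real m powr al * c m powr p) (i + l - 1))"
    by (intro mult_left_mono GBV_with_power_le_dyadic_block[OF c p a]) (auto simp: s_def)
  finally show ?thesis unfolding r by (simp only: mult_ac)
qed

lemma GBV_with_weighted_tail_block_le:
  assumes p: "0 < p" and a: "0 < al + 1" and M: "0 < M"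
  obtains K r where "0 < K" "0 < r" "r < 1"
    "\<And>c i. GBV_with M c \<Longrightarrow>
       (\<Sum>n\<in>{2^i..<2^(i+1)}. ennreal (real n powr al) * ennpow (\<Sum>\<^sub>\<infinity>k\<in>{n..}. ennreal \<bar>Delta c k\<bar>) p)
       \<le> (\<Sum>l. ennreal (K * r ^ l * dyadic_block (\<lambda>m. real m powr al * c m powr p) (i + l - 1)))"
proof -
  (* q is chosen so that the weight q^(-p l) = 2^(l (al+1)/2) uses up only half of the decay
     2^(-l (al+1)) of c(2^(i+l))^p; the other half is the geometric kernel r^l. *)
  define q where "q = 2 powr (-(al + 1) / (2 * p))"
  define r where "r = 2 powr (-(al + 1) / 2)"
  define K where "K = 2 powr \<bar>al\<bar> * (1 - q) powr (-p) * M powr p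
    * ((1 + M) powr p * 2 powr \<bar>al\<bar> * 2 powr (al + 1))"
  have q: "0 < q" "q < 1" using a p by (auto simp: q_def intro!: powr_less_one divide_neg_pos)
  have r: "0 < r" "r < 1" using a by (auto simp: r_def intro!: powr_less_one)
  have K: "0 < K" using q M by (simp add: K_def)
  have block: "(\<Sum>n\<in>{2^i..<2^(i+1)}. ennreal (real n powr al) * ennpow (B n) p)
       \<le> (\<Sum>l. ennreal (K * r ^ l * dyadic_block (\<lambda>m. real m powr al * c m powr p) (i + l - 1)))"
    if c: "GBV_with M c" and B: "B = (\<lambda>n. \<Sum>\<^sub>\<infinity>k\<in>{n..}. ennreal \<bar>Delta c k\<bar>)" for c i B
  proof -
    define W where "W = 2 powr \<bar>al\<bar> * 2 powr (real i * (al + 1))"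
    have "(\<Sum>n\<in>{2^i..<2^(i+1)}. ennreal (real n powr al) * ennpow (B n) p) \<le> ennreal W * ennpow (B (2^i)) p"
      unfolding W_def B using p by (intro weighted_dyadic_block_le_antimono antimono_infsum_ennreal_atLeast) auto
    also have "\<dots> \<le> ennreal W * (ennreal ((1 - q) powr (-p))
        * (\<Sum>l. ennreal ((M * c (2 ^ (i + l)) / q ^ l) powr p)))"
    proof (rule mult_left_mono)
      have "ennpow (B (2^i)) p \<le> ennpow (\<Sum>l. ennreal (M * c (2 ^ (i + l)))) p"
        unfolding B using p by (intro ennpow_mono GBV_with_tail_variation_le[OF c]) auto
      also have "\<dots> \<le> ennreal ((1 - q) powr (-p)) * (\<Sum>l. ennreal ((M * c (2 ^ (i + l)) / q ^ l) powr p))"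
        using p q M GBV_with_nonneg[OF c] by (intro ennpow_suminf_le_geometric_weights) auto
      finally show "ennpow (B (2^i)) p \<le> \<dots>" .
    qed simp
    also have "\<dots> = (\<Sum>l. ennreal ((1 - q) powr (-p) * 2 powr \<bar>al\<bar>
        * (2 powr (real i * (al + 1)) * (M * c (2 ^ (i + l)) / q ^ l) powr p)))"
      using q by (simp add: W_def ennreal_mult ac_simps)
    also have "\<dots> \<le> (\<Sum>l. ennreal (K * r ^ l * dyadic_block (\<lambda>m. real m powr al * c m powr p) (i + l - 1)))"
    proof (intro suminf_le summableI ennreal_leI)
      fix l
      have "(1 - q) powr (-p) * 2 powr \<bar>al\<bar>
          * (2 powr (real i * (al + 1)) * (M * c (2 ^ (i + l)) / q ^ l) powr p)
        \<le> (1 - q) powr (-p) * 2 powr \<bar>al\<bar> * (M powr p * ((1 + M) powr p * 2 powr \<bar>al\<bar> * 2 powr (al + 1))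
          * r ^ l * dyadic_block (\<lambda>m. real m powr al * c m powr p) (i + l - 1))"
        unfolding q_def r_def by (intro mult_left_mono GBV_with_weighted_term_le[OF c p a]) auto
      then show "(1 - q) powr (-p) * 2 powr \<bar>al\<bar>
          * (2 powr (real i * (al + 1)) * (M * c (2 ^ (i + l)) / q ^ l) powr p)
        \<le> K * r ^ l * dyadic_block (\<lambda>m. real m powr al * c m powr p) (i + l - 1)"
        by (simp add: K_def mult_ac)
    qed
    finally show ?thesis .
  qed
  show ?thesis by (rule that[OF K r block[OF _ refl]])
qed

theorem mainTheorem6:
  fixes p \<gamma> M :: real
  assumes "1 < p" and "1/p - 1 < \<gamma>" and "\<gamma> < 1/p" and "M > 0"
  shows "\<exists>C::real. C > 0 \<and> (\<forall>c::nat \<Rightarrow> real. GBV_with M c \<longrightarrow>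
     (\<Sum>\<^sub>\<infinity>n\<in>{1..}. ennreal (real n powr (p + p*\<gamma> - 2)) *
         ennpow (\<Sum>\<^sub>\<infinity>k\<in>{n..}. ennreal \<bar>Delta c k\<bar>) p)
     \<le> ennreal C * (\<Sum>\<^sub>\<infinity>n\<in>{1..}. ennreal (real n powr (p + p*\<gamma> - 2) * c n powr p)))"
proof -
  define al where "al = p + p * \<gamma> - 2"
  have p: "0 < p" using assms(1) by simp
  have a: "0 < al + 1"
    using mult_strict_left_mono[OF assms(2) p] p by (simp add: al_def algebra_simps)
  obtain K r where K: "0 < K" and r: "0 < r" "r < 1"
    and block: "\<And>c i. GBV_with M c \<Longrightarrow>
       (\<Sum>n\<in>{2^i..<2^(i+1)}. ennreal (real n powr al) * ennpow (\<Sum>\<^sub>\<infinity>k\<in>{n..}. ennreal \<bar>Delta c k\<bar>) p)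
       \<le> (\<Sum>l. ennreal (K * r ^ l * dyadic_block (\<lambda>m. real m powr al * c m powr p) (i + l - 1)))"
    using GBV_with_weighted_tail_block_le[OF p a assms(4)] by blast
  show ?thesis unfolding al_def[symmetric]
  proof (intro exI[of _ "2 * K / (1 - r)"] conjI allI impI)
    show "0 < 2 * K / (1 - r)" using K r by simp
    fix c assume "GBV_with M c"
    then show "(\<Sum>\<^sub>\<infinity>n\<in>{1..}. ennreal (real n powr al) * ennpow (\<Sum>\<^sub>\<infinity>k\<in>{n..}. ennreal \<bar>Delta c k\<bar>) p)
        \<le> ennreal (2 * K / (1 - r)) * (\<Sum>\<^sub>\<infinity>n\<in>{1..}. ennreal (real n powr al * c n powr p))"
      using K r by (intro infsum_le_of_dyadic_blocks_le_convolution block) auto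
  qed
qed

end
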